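(* For every odd $n\ge 1$, the permutation $\zeta_n$, which has length $(n^2+1)/2$, contains a subsequence order-isomorphic to every permutation of length $n$.
   Context: The word $z_n$ is the concatenation of $n$ runs $r_1\cdots r_n$, where for odd $k$, $r_k$ lists the odd integers in $[n]$ increasingly and for even $k$, $r_k$ lists the even integers in $[n]$ decreasingly. The permutation $\zeta_n$ of length $|z_n|$ is the unique permutation such that for $i\ne j$: $\zeta_n(i)>\zeta_n(j)$ iff either $z_n(i)>z_n(j)$, or $z_n(i)=z_n(j)$ and $i<j$. Words $u,v$ of length $k$ are order-isomorphic if $u(i)>u(j)\iff v(i)>v(j)$ for all $i,j\in[k]$. *)

theory Defs
  imports Main "HOL-Library.Sublist"
begin

definition zrun :: "nat \<Rightarrow> nat \<Rightarrow> nat list" where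
  "zrun n k = (if odd k then filter odd [1..<n+1] else rev (filter even [1..<n+1]))"

definition zword :: "nat \<Rightarrow> nat list" where
  "zword n = concat (map (zrun n) [1..<n+1])"

definition is_perm :: "nat \<Rightarrow> nat list \<Rightarrow> bool" where
  "is_perm m p \<longleftrightarrow> distinct p \<and> set p = {1..m}"

definition zeta :: "nat \<Rightarrow> nat list" where
  "zeta n = (THE p. is_perm (length (zword n)) p \<and>
     (\<forall>i < length (zword n). \<forall>j < length (zword n). i \<noteq> j \<longrightarrow>
        (p ! i > p ! j \<longleftrightarrow>
           (zword n ! i > zword n ! j \<or> (zword n ! i = zword n ! j \<and> i < j)))))"

definition order_iso :: "nat list \<Rightarrow> nat list \<Rightarrow> bool" where
  "order_iso u v \<longleftrightarrow> length u = length v \<and>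
     (\<forall>i < length u. \<forall>j < length u. (u ! i > u ! j \<longleftrightarrow> v ! i > v ! j))"

end

theory Submission
  imports Defs "HOL-Library.Product_Lexorder"
begin

text \<open>A word with letters in \<open>{1..n}\<close> embeds into \<open>z\<^sub>n\<close> greedily: each letter stays in the
  current run if it has the same parity as its predecessor and comes later in that run (odd runs
  increase, even runs decrease), moves to the next run if the parity changes, and two runs further
  otherwise. As \<open>\<zeta>\<^sub>n\<close> is the standardization of \<open>z\<^sub>n\<close>, embedding any word whose
  standardization is \<open>\<pi>\<close> into the first \<open>n\<close> runs yields an occurrence of \<open>\<pi>\<close> in \<open>\<zeta>\<^sub>n\<close>.

  If \<open>c + 1\<close> precedes \<open>c\<close> in \<open>\<pi>\<close> without being adjacent to it, merging \<open>c + 1\<close> into \<open>c\<close>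
  gives a word \<open>w\<close> without equal adjacent letters such that \<open>w\<close> and \<open>w + 1\<close> both standardize
  to \<open>\<pi>\<close>; their greedy embeddings end in runs adding up to \<open>2n + 1\<close>, so one of them ends in a run
  \<open>\<le> n\<close>. Otherwise \<open>\<pi>\<close> is layered, and its own greedy embedding uses at most one run per
  letter, plus one while the current decreasing block starts at an even value.\<close>

section \<open>Permutations and standardization\<close>

lemma is_perm_length: "is_perm L p \<Longrightarrow> length p = L"
  unfolding is_perm_def by (metis card_atLeastAtMost diff_Suc_1 distinct_card)

lemma is_perm_nth_eq_iff:
  assumes "is_perm n p" "i < n" "j < n"
  shows "p ! i = p ! j \<longleftrightarrow> i = j"
  using assms is_perm_length[OF assms(1)] unfolding is_perm_def by (simp add: nth_eq_iff_index_eq)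

lemma is_perm_nth_range:
  assumes "is_perm n p" "i < n"
  shows "p ! i \<in> {1..n}"
  using assms is_perm_length[OF assms(1)] unfolding is_perm_def by (metis nth_mem)

lemma is_perm_surj:
  assumes "is_perm n p" "v \<in> {1..n}"
  shows "\<exists>i<n. p ! i = v"
  using assms is_perm_length[OF assms(1)] unfolding is_perm_def by (metis in_set_conv_nth)

lemma is_perm_nth_eq_card_less:
  assumes perm: "is_perm L p" and "i < L"
  shows "p ! i = Suc (card {j. j < L \<and> p ! j < p ! i})"
proof -
  have "(!) p ` {j. j < L \<and> p ! j < p ! i} = {1..<p ! i}"
  proof
    show "(!) p ` {j. j < L \<and> p ! j < p ! i} \<subseteq> {1..<p ! i}"
      using is_perm_nth_range[OF perm] by force
    show "{1..<p ! i} \<subseteq> (!) p ` {j. j < L \<and> p ! j < p ! i}"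
    proof
      fix v assume v: "v \<in> {1..<p ! i}"
      then have "v \<in> {1..L}" using is_perm_nth_range[OF perm \<open>i < L\<close>] by auto
      then obtain j where "j < L" "p ! j = v" using is_perm_surj[OF perm] by blast
      then show "v \<in> (!) p ` {j. j < L \<and> p ! j < p ! i}" using v by auto
    qed
  qed
  moreover have "inj_on ((!) p) {j. j < L \<and> p ! j < p ! i}"
    using is_perm_nth_eq_iff[OF perm] by (auto simp: inj_on_def)
  moreover have "1 \<le> p ! i" using is_perm_nth_range[OF assms] by simp
  ultimately show ?thesis by (metis card_image card_atLeastLessThan Suc_diff_le diff_Suc_1)
qed

lemma ranking_is_perm:
  fixes key :: "nat \<Rightarrow> 'a::linorder"
  assumes "inj_on key {..<L}"
  defines "rank \<equiv> \<lambda>i. Suc (card {j. j < L \<and> key j < key i})"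
  shows "is_perm L (map rank [0..<L])"
    and "i < L \<Longrightarrow> j < L \<Longrightarrow> rank j < rank i \<longleftrightarrow> key j < key i"
proof -
  have less: "rank j < rank i" if "key j < key i" "j < L" for i j
  proof -
    have "{l. l < L \<and> key l < key j} \<subset> {l. l < L \<and> key l < key i}"
      using that by auto
    then show ?thesis unfolding rank_def by (simp add: psubset_card_mono)
  qed
  show iff: "rank j < rank i \<longleftrightarrow> key j < key i" if "i < L" "j < L" for i j
  proof
    assume "rank j < rank i"
    moreover have "key i = key j \<Longrightarrow> i = j" using assms(1) that by (auto dest: inj_onD)
    ultimately show "key j < key i" using less[of i j] that by (cases "key i" "key j" rule: linorder_cases) auto
  qed (rule less[OF _ that(2)])
  have dist: "distinct (map rank [0..<L])"
  proof (unfold distinct_map, intro conjI inj_onI)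
    fix i j assume "i \<in> set [0..<L]" "j \<in> set [0..<L]" "rank i = rank j"
    then show "i = j" using iff[of i j] iff[of j i] assms(1)
      by (cases "key i" "key j" rule: linorder_cases) (auto dest: inj_onD)
  qed simp
  have "rank i \<in> {1..L}" if "i < L" for i
  proof -
    have "{j. j < L \<and> key j < key i} \<subseteq> {..<L} - {i}" by auto
    then have "card {j. j < L \<and> key j < key i} \<le> L - 1"
      using that by (metis card_Diff_singleton card_lessThan card_mono finite_Diff finite_lessThan lessThan_iff)
    then show ?thesis using that unfolding rank_def by auto
  qed
  then have "set (map rank [0..<L]) \<subseteq> {1..L}" by auto
  moreover have "card (set (map rank [0..<L])) = L" using distinct_card[OF dist] by simp
  ultimately show "is_perm L (map rank [0..<L])"
    using dist unfolding is_perm_def by (simp add: card_subset_eq)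
qed

definition standardizes :: "nat list \<Rightarrow> nat list \<Rightarrow> bool" where
  "standardizes p w \<longleftrightarrow> length p = length w \<and>
     (\<forall>i < length w. \<forall>j < length w. i \<noteq> j \<longrightarrow>
        (p ! i > p ! j \<longleftrightarrow> (w ! i > w ! j \<or> (w ! i = w ! j \<and> i < j))))"

lemma standardization_ex1: "\<exists>!p. is_perm (length w) p \<and> standardizes p w"
proof -
  define L where "L = length w"
  \<comment> \<open>positions ordered by their letters, equal letters from right to left\<close>
  define key where "key i = (w ! i, L - i)" for i
  define rank where "rank i = Suc (card {j. j < L \<and> key j < key i})" for i
  have "inj_on key {..<L}" unfolding key_def by (rule inj_onI) auto
  note ranking = ranking_is_perm[OF this, folded rank_def]
  have key_less: "key j < key i \<longleftrightarrow> w ! i > w ! j \<or> (w ! i = w ! j \<and> i < j)"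
    if "i < L" "j < L" for i j
    using that unfolding key_def by (auto simp: less_prod_def)
  have "standardizes (map rank [0..<L]) w"
    unfolding standardizes_def using ranking(2) key_less by (simp add: L_def)
  moreover have "p = map rank [0..<L]" if "is_perm L p" "standardizes p w" for p
  proof (rule nth_equalityI)
    show "length p = length (map rank [0..<L])" using is_perm_length[OF that(1)] by simp
    fix i assume "i < length p"
    then have i: "i < L" using is_perm_length[OF that(1)] by simp
    have "{j. j < L \<and> p ! j < p ! i} = {j. j < L \<and> key j < key i}"
      using that(2) i key_less unfolding standardizes_def L_def by (auto simp: key_def)
    then show "p ! i = map rank [0..<L] ! i"
      using is_perm_nth_eq_card_less[OF that(1) i] i by (simp add: rank_def)
  qed
  ultimately show ?thesis using ranking(1) unfolding L_def by blast
qed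

lemma zeta_standardizes: "is_perm (length (zword n)) (zeta n) \<and> standardizes (zeta n) (zword n)"
proof -
  have "is_perm (length (zword n)) p \<and> standardizes p (zword n) \<longleftrightarrow>
    is_perm (length (zword n)) p \<and> (\<forall>i < length (zword n). \<forall>j < length (zword n). i \<noteq> j \<longrightarrow>
        (p ! i > p ! j \<longleftrightarrow> (zword n ! i > zword n ! j \<or> (zword n ! i = zword n ! j \<and> i < j))))"
    for p
    unfolding standardizes_def using is_perm_length by blast
  then have "zeta n = (THE p. is_perm (length (zword n)) p \<and> standardizes p (zword n))"
    unfolding zeta_def by presburger
  then show ?thesis using theI'[OF standardization_ex1] by simp
qed

lemma length_zeta: "length (zeta n) = length (zword n)"
  using zeta_standardizes by (blast dest: is_perm_length)

lemma standardizes_order_iso: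
  assumes "standardizes p w" "standardizes q w"
  shows "order_iso p q"
  unfolding order_iso_def
proof (intro conjI allI impI)
  show "length p = length q" using assms unfolding standardizes_def by simp
  fix i j assume "i < length p" "j < length p"
  then show "p ! i > p ! j \<longleftrightarrow> q ! i > q ! j"
    using assms unfolding standardizes_def by (cases "i = j") auto
qed

lemma standardizes_restrict:
  assumes "standardizes p z" "strict_mono_on {..<m} f" "\<forall>k<m. f k < length z"
  shows "standardizes (map (\<lambda>k. p ! f k) [0..<m]) (map (\<lambda>k. z ! f k) [0..<m])"
    (is "standardizes ?p ?z")
  unfolding standardizes_def
proof (intro conjI allI impI)
  fix i j assume "i < length ?z" "j < length ?z" "i \<noteq> j"
  then have ij: "i < m" "j < m" "i \<noteq> j" by auto
  then have "f i \<noteq> f j" "f i < f j \<longleftrightarrow> i < j"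
    using assms(2) by (auto simp: strict_mono_on_def) (metis linorder_neqE less_asym)+
  then show "?p ! i > ?p ! j \<longleftrightarrow> ?z ! i > ?z ! j \<or> (?z ! i = ?z ! j \<and> i < j)"
    using assms(1,3) ij unfolding standardizes_def by auto
qed simp

lemma subseq_map_nth_strict_mono:
  assumes "strict_mono_on {..<m} f" "\<forall>k<m. f k < length xs"
  shows "subseq (map (\<lambda>k. xs ! f k) [0..<m]) xs"
proof -
  have "subseq (map (\<lambda>k. xs ! f k) [0..<m]) (take b xs)"
    if "\<forall>k<m. f k < b" "b \<le> length xs" for b
    using that assms(1)
  proof (induction m arbitrary: b)
    case 0 then show ?case by simp
  next
    case (Suc m)
    have fm: "f m < b" using Suc.prems(1) by simp
    have "strict_mono_on {..<m} f" "\<forall>k<m. f k < f m"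
      using Suc.prems(3) by (auto simp: strict_mono_on_def)
    then have init: "subseq (map (\<lambda>k. xs ! f k) [0..<m]) (take (f m) xs)"
      using Suc.IH[of "f m"] fm Suc.prems(2) by simp
    have last: "subseq [xs ! f m] (xs ! f m # drop (Suc (f m)) (take b xs))" by simp
    have split: "take b xs = take (f m) xs @ xs ! f m # drop (Suc (f m)) (take b xs)"
    proof -
      have "take b xs = take (f m) (take b xs) @ take b xs ! f m # drop (Suc (f m)) (take b xs)"
        by (rule id_take_nth_drop) (use fm Suc.prems(2) in simp)
      then show ?thesis using fm by simp
    qed
    show ?case using list_emb_append_mono[OF init last] by (subst split) simp
  qed
  from this[of "length xs"] show ?thesis using assms(2) by simp
qed

lemma distinct_standardizes_self:
  assumes "distinct p"
  shows "standardizes p p"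
  unfolding standardizes_def
proof (intro conjI allI impI)
  fix i j assume "i < length p" "j < length p" "i \<noteq> j"
  then have "p ! i \<noteq> p ! j" using assms by (simp add: nth_eq_iff_index_eq)
  then show "p ! i > p ! j \<longleftrightarrow> p ! i > p ! j \<or> (p ! i = p ! j \<and> i < j)" by simp
qed simp

section \<open>The runs of \<open>z\<^sub>n\<close>\<close>

lemma filter_odd_upt: "filter odd [1..<n+1] = map (\<lambda>i. 2*i+1) [0..<(n+1) div 2]"
proof (induction n)
  case (Suc n)
  then show ?case by (cases "even n") (auto elim!: evenE oddE)
qed simp

lemma filter_even_upt: "filter even [1..<n+1] = map (\<lambda>i. 2*i+2) [0..<n div 2]"
proof (induction n)
  case (Suc n)
  then show ?case by (cases "even n") (auto elim!: evenE oddE)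
qed simp

lemma length_zrun: "length (zrun n r) = (if odd r then (n+1) div 2 else n div 2)"
  by (simp only: zrun_def filter_odd_upt filter_even_upt) simp

definition run_index :: "nat \<Rightarrow> nat \<Rightarrow> nat" where
  "run_index n a = (if odd a then a div 2 else n div 2 - a div 2)"

lemma zrun_run_index:
  assumes "1 \<le> a" "a \<le> n" "odd r \<longleftrightarrow> odd a"
  shows "run_index n a < length (zrun n r) \<and> zrun n r ! run_index n a = a"
proof (cases "odd a")
  case True
  have "zrun n r = map (\<lambda>i. 2*i+1) [0..<(n+1) div 2]"
    using True assms(3) unfolding zrun_def filter_odd_upt by simp
  then show ?thesis using True assms(2) by (auto simp: run_index_def elim!: oddE)
next
  case False
  then obtain c where "a = 2 * c" "1 \<le> c" "c \<le> n div 2" using assms(1,2) by (auto elim!: evenE)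
  moreover have "zrun n r = rev (map (\<lambda>i. 2*i+2) [0..<n div 2])"
    using assms(3) False by (simp only: zrun_def filter_even_upt if_False)
  ultimately show ?thesis using False by (auto simp: run_index_def rev_nth)
qed

definition run_start :: "nat \<Rightarrow> nat \<Rightarrow> nat" where
  "run_start n r = length (concat (map (zrun n) [1..<r]))"

lemma run_start_Suc: "1 \<le> r \<Longrightarrow> run_start n (Suc r) = run_start n r + length (zrun n r)"
  by (simp add: run_start_def)

lemma run_start_mono:
  assumes "1 \<le> r" "r \<le> r'"
  shows "run_start n r \<le> run_start n r'"
  using assms(2) by (induction r' rule: dec_induct) (use assms(1) in \<open>auto simp: run_start_Suc\<close>)

lemma length_zword: "length (zword n) = run_start n (n + 1)"
  by (simp add: run_start_def zword_def)

lemma zword_nth_run_start: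
  assumes "1 \<le> r" "r \<le> n" "i < length (zrun n r)"
  shows "zword n ! (run_start n r + i) = zrun n r ! i"
proof -
  have "[1..<n+1] = [1..<r] @ [r..<n+1]"
    using upt_add_eq_append[of 1 r "n+1-r"] assms(1,2) by simp
  also have "[r..<n+1] = r # [Suc r..<n+1]" using assms(2) by (simp add: upt_conv_Cons)
  finally have "zword n = concat (map (zrun n) [1..<r]) @ zrun n r @ concat (map (zrun n) [Suc r..<n+1])"
    by (simp add: zword_def)
  then show ?thesis using assms(3) by (simp add: run_start_def nth_append)
qed

lemma run_start_closed_form:
  "1 \<le> r \<Longrightarrow> run_start n r = (r div 2) * ((n+1) div 2) + ((r-1) div 2) * (n div 2)"
proof (induction r rule: dec_induct)
  case (step m)
  show ?case
  proof (cases "odd m")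
    case True
    then obtain b where "m = 2*b + 1" by (blast elim: oddE)
    then show ?thesis using step by (simp add: run_start_Suc length_zrun algebra_simps)
  next
    case False
    then obtain b where "m = 2 * Suc b" using step(1) by (metis evenE One_nat_def not0_implies_Suc not_one_le_zero mult_0_right)
    then show ?thesis using step by (simp add: run_start_Suc length_zrun algebra_simps)
  qed
qed (simp add: run_start_def)

lemma length_zword_odd:
  assumes "odd n"
  shows "length (zword n) = (n^2 + 1) div 2"
proof -
  obtain e where e: "n = 2*e + 1" using assms by (blast elim: oddE)
  then have "length (zword n) = (e+1)*(e+1) + e*e"
    using run_start_closed_form[of "n+1" n] by (simp add: length_zword)
  also have "\<dots> = (n^2 + 1) div 2" using e by (simp add: power2_eq_square algebra_simps)
  finally show ?thesis .
qed

definition run_pos :: "nat \<Rightarrow> nat \<Rightarrow> nat \<Rightarrow> nat" where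
  "run_pos n r a = run_start n r + run_index n a"

lemma zword_run_pos:
  assumes "1 \<le> r" "r \<le> n" "1 \<le> a" "a \<le> n" "odd r \<longleftrightarrow> odd a"
  shows "run_pos n r a < run_start n (Suc r)" "run_pos n r a < length (zword n)"
    and "zword n ! run_pos n r a = a"
proof -
  note index = zrun_run_index[OF assms(3-5)]
  show less: "run_pos n r a < run_start n (Suc r)"
    using index run_start_Suc[OF assms(1)] by (simp add: run_pos_def)
  show "run_pos n r a < length (zword n)"
    using less run_start_mono[of "Suc r" "n+1" n] assms(2) by (simp add: length_zword)
  show "zword n ! run_pos n r a = a"
    using zword_nth_run_start[OF assms(1,2)] index by (simp add: run_pos_def)
qed

section \<open>Greedy embedding into \<open>z\<^sub>n\<close>\<close>

definition run_step :: "nat \<Rightarrow> nat \<Rightarrow> nat" where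
  "run_step a b = (if odd a \<noteq> odd b then 1 else if odd a \<and> a < b \<or> even a \<and> b < a then 0 else 2)"

fun greedy_run :: "nat list \<Rightarrow> nat \<Rightarrow> nat" where
  "greedy_run w 0 = (if odd (w ! 0) then 1 else 2)"
| "greedy_run w (Suc k) = greedy_run w k + run_step (w ! k) (w ! Suc k)"

lemma odd_greedy_run: "odd (greedy_run w k) \<longleftrightarrow> odd (w ! k)"
  by (induction k) (auto simp: run_step_def)

lemma one_le_greedy_run: "1 \<le> greedy_run w k"
  by (induction k) auto

lemma greedy_run_mono: "k \<le> k' \<Longrightarrow> greedy_run w k \<le> greedy_run w k'"
  by (rule lift_Suc_mono_le[of "greedy_run w"]) auto

lemma run_pos_less_run_pos_step:
  assumes "1 \<le> r" "r + run_step a b \<le> n" "1 \<le> a" "a \<le> n" "1 \<le> b" "b \<le> n" "odd r \<longleftrightarrow> odd a"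
  shows "run_pos n r a < run_pos n (r + run_step a b) b"
proof (cases "run_step a b = 0")
  case True
  then consider "odd a" "odd b" "a < b" | "even a" "even b" "b < a"
    by (auto simp: run_step_def split: if_splits)
  then have "run_index n a < run_index n b"
  proof cases
    case 1
    then show ?thesis by (auto simp: run_index_def elim!: oddE)
  next
    case 2
    moreover have "a div 2 \<le> n div 2" using assms(4) by (rule div_le_mono)
    ultimately show ?thesis by (auto simp: run_index_def elim!: evenE)
  qed
  then show ?thesis using True by (simp add: run_pos_def)
next
  case False
  have "run_pos n r a < run_start n (Suc r)"
    using zword_run_pos(1)[OF assms(1) _ assms(3,4,7)] assms(2) by simp
  also have "\<dots> \<le> run_start n (r + run_step a b)" using False by (intro run_start_mono) auto
  also have "\<dots> \<le> run_pos n (r + run_step a b) b" by (simp add: run_pos_def)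
  finally show ?thesis .
qed

lemma greedy_embedding:
  assumes "\<forall>k<length w. w ! k \<in> {1..n}" "greedy_run w (length w - 1) \<le> n"
  shows "\<exists>f. strict_mono_on {..<length w} f \<and>
           (\<forall>k<length w. f k < length (zword n) \<and> zword n ! f k = w ! k)"
proof -
  define f where "f k = run_pos n (greedy_run w k) (w ! k)" for k
  have run: "1 \<le> greedy_run w k \<and> greedy_run w k \<le> n" if "k < length w" for k
    using one_le_greedy_run greedy_run_mono[of k "length w - 1" w] assms(2) that by force
  have step: "f k < f (Suc k)" if "Suc k < length w" for k
    using run_pos_less_run_pos_step[of "greedy_run w k" "w ! k" "w ! Suc k" n]
      run[of k] run[of "Suc k"] assms(1) that odd_greedy_run[of w k]
    by (simp add: f_def)
  have "strict_mono_on {..<length w} f"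
  proof (rule strict_mono_onI)
    fix r s assume "r \<in> {..<length w}" "s \<in> {..<length w}" "r < s"
    moreover have "k \<in> {..<length w - 1} \<Longrightarrow> f k < f (Suc k)" for k using step by simp
    moreover have "{r..<s} \<subseteq> {..<length w - 1}" using calculation(2) by auto
    ultimately show "f r < f s" using lift_Suc_mono_less_ivl by blast
  qed
  moreover have "f k < length (zword n) \<and> zword n ! f k = w ! k" if "k < length w" for k
    using zword_run_pos(2,3)[of "greedy_run w k" n "w ! k"] run[OF that] assms(1) that odd_greedy_run
    by (simp add: f_def)
  ultimately show ?thesis by blast
qed

lemma zeta_contains_standardization:
  assumes "\<forall>k<length w. w ! k \<in> {1..n}" "greedy_run w (length w - 1) \<le> n" "standardizes p w"
  shows "\<exists>s. subseq s (zeta n) \<and> order_iso s p"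
proof -
  obtain f where f: "strict_mono_on {..<length w} f"
    "\<forall>k<length w. f k < length (zword n) \<and> zword n ! f k = w ! k"
    using greedy_embedding[OF assms(1,2)] by blast
  define s where "s = map (\<lambda>k. zeta n ! f k) [0..<length w]"
  have sub: "subseq s (zeta n)"
    unfolding s_def by (rule subseq_map_nth_strict_mono) (use f in \<open>simp_all add: length_zeta\<close>)
  have "standardizes s (map (\<lambda>k. zword n ! f k) [0..<length w])"
    unfolding s_def by (rule standardizes_restrict) (use f zeta_standardizes in simp_all)
  moreover have "map (\<lambda>k. zword n ! f k) [0..<length w] = w"
    using f(2) by (intro nth_equalityI) simp_all
  ultimately have "order_iso s p" using standardizes_order_iso assms(3) by simp
  with sub show ?thesis by blast
qed

section \<open>Non-layered permutations\<close>

text \<open>For a permutation this means that it is a concatenation of decreasing blocks of consecutive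
  values, each block lying above the preceding ones.\<close>

definition layered :: "nat list \<Rightarrow> bool" where
  "layered p \<longleftrightarrow> (\<forall>i<length p. \<forall>j<i. p ! j = Suc (p ! i) \<longrightarrow> i = Suc j)"

lemma standardizes_map_Suc: "standardizes p w \<Longrightarrow> standardizes p (map Suc w)"
  unfolding standardizes_def by simp

definition collapse :: "nat \<Rightarrow> nat \<Rightarrow> nat" where
  "collapse c v = (if v \<le> c then v else v - 1)"

lemma collapse_eq_iff:
  "collapse c u = collapse c v \<longleftrightarrow> u = v \<or> {u, v} = {c, Suc c}"
  unfolding collapse_def by (auto simp: doubleton_eq_iff)

lemma collapse_mono: "u \<le> v \<Longrightarrow> collapse c u \<le> collapse c v"
  unfolding collapse_def by auto

lemma standardizes_collapse:
  assumes "distinct p" "j < i" "i < length p" "p ! j = Suc (p ! i)"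
  shows "standardizes p (map (collapse (p ! i)) p)"
  unfolding standardizes_def
proof (intro conjI allI impI)
  fix k l assume kl: "k < length (map (collapse (p ! i)) p)" "l < length (map (collapse (p ! i)) p)" "k \<noteq> l"
  have inj: "x < length p \<Longrightarrow> y < length p \<Longrightarrow> p ! x = p ! y \<Longrightarrow> x = y" for x y
    using assms(1) by (simp add: nth_eq_iff_index_eq)
  have merged: "{k, l} = {i, j}" if "collapse (p ! i) (p ! k) = collapse (p ! i) (p ! l)"
    using that kl assms(2-4) inj[of k l] inj[of k i] inj[of k j] inj[of l i] inj[of l j]
    unfolding collapse_eq_iff by auto
  have "p ! k \<noteq> p ! l" using inj[of k l] kl by auto
  then show "p ! k > p ! l \<longleftrightarrow> map (collapse (p ! i)) p ! k > map (collapse (p ! i)) p ! l \<or>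
      (map (collapse (p ! i)) p ! k = map (collapse (p ! i)) p ! l \<and> k < l)"
    using kl merged assms(2,4) collapse_mono[of "p ! k" "p ! l" "p ! i"] collapse_mono[of "p ! l" "p ! k" "p ! i"]
    by (cases "p ! k > p ! l") (auto simp: doubleton_eq_iff)
qed simp

text \<open>For \<open>a \<noteq> b\<close> exactly one of the steps \<open>a \<rightarrow> b\<close> and \<open>a + 1 \<rightarrow> b + 1\<close> stays within a run.\<close>

lemma greedy_run_map_Suc_add:
  assumes "\<forall>k. Suc k < length w \<longrightarrow> w ! k \<noteq> w ! Suc k" "k < length w"
  shows "greedy_run (map Suc w) k + greedy_run w k = 2 * k + 3"
  using assms(2)
proof (induction k)
  case (Suc k)
  have "run_step (Suc (w ! k)) (Suc (w ! Suc k)) + run_step (w ! k) (w ! Suc k) = 2"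
    using assms(1) Suc.prems by (auto simp: run_step_def)
  then show ?case using Suc by simp
qed auto

lemma non_layered_fitting_word:
  assumes perm: "is_perm n p" and "\<not> layered p"
  shows "\<exists>w. length w = n \<and> (\<forall>k<n. w ! k \<in> {1..n}) \<and> standardizes p w \<and> greedy_run w (n - 1) \<le> n"
proof -
  have len: "length p = n" using perm by (rule is_perm_length)
  obtain i j where ij: "i < n" "j < i" "p ! j = Suc (p ! i)" "i \<noteq> Suc j"
    using assms(2) len unfolding layered_def by blast
  define w where "w = map (collapse (p ! i)) p"
  have lw: "length w = n" using len by (simp add: w_def)
  have std: "standardizes p w"
    unfolding w_def using perm ij len by (intro standardizes_collapse) (auto simp: is_perm_def)
  have "p ! i \<in> {1..n - 1}" using is_perm_nth_range[OF perm, of j] is_perm_nth_range[OF perm, of i] ij by auto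
  then have range: "w ! k \<in> {1..n - 1}" if "k < n" for k
    using is_perm_nth_range[OF perm that] that len by (auto simp: w_def collapse_def)
  then have ranges: "\<forall>k<n. w ! k \<in> {1..n}" "\<forall>k<n. map Suc w ! k \<in> {1..n}"
    using lw by fastforce+
  have adjacent: "\<forall>k. Suc k < length w \<longrightarrow> w ! k \<noteq> w ! Suc k"
  proof (intro allI impI notI)
    fix k assume k: "Suc k < length w" "w ! k = w ! Suc k"
    then have "{p ! k, p ! Suc k} = {p ! i, p ! j}"
      using is_perm_nth_eq_iff[OF perm, of k "Suc k"] ij(3) len
      by (auto simp: w_def collapse_eq_iff)
    then have "{k, Suc k} = {i, j}"
      using is_perm_nth_eq_iff[OF perm] k(1) ij(1,2) len by (auto simp: doubleton_eq_iff w_def)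
    then show False using ij(2,4) by (auto simp: doubleton_eq_iff)
  qed
  have "greedy_run (map Suc w) (n - 1) + greedy_run w (n - 1) = 2 * n + 1"
    using greedy_run_map_Suc_add[OF adjacent, of "n - 1"] ij(1) lw by simp
  then consider "greedy_run w (n - 1) \<le> n" | "greedy_run (map Suc w) (n - 1) \<le> n" by linarith
  then show ?thesis
  proof cases
    case 1
    then show ?thesis using std ranges(1) lw by blast
  next
    case 2
    then show ?thesis using standardizes_map_Suc[OF std] ranges(2) lw
      by (intro exI[of _ "map Suc w"]) simp
  qed
qed

section \<open>Layered permutations\<close>

lemma discrete_ivt:
  assumes "P u" "\<not> P x" "u < x"
  shows "\<exists>c. u \<le> c \<and> c < x \<and> P c \<and> \<not> P (Suc c)"
  using assms
proof (induction x)
  case (Suc x)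
  show ?case
  proof (cases "P x")
    case True
    then show ?thesis using Suc.prems by (intro exI[of _ x]) auto
  next
    case False
    then have "u < x" using Suc.prems by (cases "u = x") auto
    then show ?thesis using Suc.IH[OF Suc.prems(1) False] by auto
  qed
qed simp

lemma layered_crossing:
  assumes perm: "is_perm n p" and "layered p" "i < n" "k < i" "j \<le> k" "p ! i < p ! j"
  shows "p ! k = Suc (p ! Suc k)"
proof -
  let ?late = "\<lambda>v. \<exists>l<n. k < l \<and> p ! l = v"
  have "\<not> ?late (p ! j)" using is_perm_nth_eq_iff[OF perm] assms(3-5) by fastforce
  then obtain c where c: "c < p ! j" "?late c" "\<not> ?late (Suc c)"
    using discrete_ivt[of ?late "p ! i" "p ! j"] assms(3,4,6) by blast
  then obtain l where l: "l < n" "k < l" "p ! l = c" by blast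
  have "Suc c \<in> {1..n}" using c(1) is_perm_nth_range[OF perm, of j] assms(3-5) by auto
  then obtain m where m: "m < n" "p ! m = Suc c" using is_perm_surj[OF perm] by blast
  have "m \<le> k" using c(3) m by (meson not_le)
  then have "l = Suc m" using assms(2) l m is_perm_length[OF perm] unfolding layered_def by auto
  then have "m = k" using \<open>m \<le> k\<close> l(2) by simp
  then show ?thesis using l m \<open>l = Suc m\<close> by simp
qed

lemma layered_ascent_prefix:
  assumes perm: "is_perm n p" and "layered p" "Suc k < n" "p ! k < p ! Suc k"
  shows "(!) p ` {..k} = {1..Suc k}"
proof -
  let ?A = "(!) p ` {..k}"
  have below: "p ! j < p ! l" if "j \<le> k" "k < l" "l < n" for j l
  proof (rule ccontr)
    assume "\<not> p ! j < p ! l"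
    then have "p ! l < p ! j" using is_perm_nth_eq_iff[OF perm, of l j] that assms(3) by auto
    then show False using layered_crossing[OF perm assms(2) that(3,2,1)] assms(4) by simp
  qed
  have down: "{1..v} \<subseteq> ?A" if v: "v \<in> ?A" for v
  proof
    fix u assume "u \<in> {1..v}"
    moreover have "v \<in> {1..n}" using v is_perm_nth_range[OF perm] assms(3) by auto
    ultimately obtain l where "l < n" "p ! l = u" using is_perm_surj[OF perm] by fastforce
    moreover obtain j where "j \<le> k" "p ! j = v" using v by auto
    ultimately show "u \<in> ?A" using below[of j l] \<open>u \<in> {1..v}\<close> by (cases "l \<le> k") auto
  qed
  have card: "card ?A = Suc k"
    using is_perm_nth_eq_iff[OF perm] assms(3) by (subst card_image) (auto simp: inj_on_def)
  have "?A \<subseteq> {1..Suc k}"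
  proof
    fix v assume "v \<in> ?A"
    then have "card {1..v} \<le> card ?A" using down by (intro card_mono) auto
    moreover have "1 \<le> v" using \<open>v \<in> ?A\<close> is_perm_nth_range[OF perm] assms(3) by auto
    ultimately show "v \<in> {1..Suc k}" using card by simp
  qed
  then show ?thesis using card by (intro card_subset_eq) auto
qed

lemma Max_atLeastAtMost_nat: "a \<le> b \<Longrightarrow> Max {a..b} = (b::nat)"
  by (rule Max_eqI) auto

lemma greedy_run_layered:
  assumes perm: "is_perm n p" and "layered p" "odd n"
  shows "greedy_run p (n - 1) \<le> n"
proof -
  \<comment> \<open>the first value of the block containing position \<open>k\<close>\<close>
  define M where "M k = Max ((!) p ` {..k})" for k
  have bound: "greedy_run p k \<le> Suc k + (if even (M k) then 1 else 0)" if "k < n" for k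
    using that
  proof (induction k)
    case 0
    then show ?case by (simp add: M_def)
  next
    case (Suc k)
    have prefix: "(!) p ` {..Suc k} = insert (p ! Suc k) ((!) p ` {..k})" by (auto simp: atMost_Suc)
    show ?case
    proof (cases "p ! Suc k < p ! k")
      case True
      then have "p ! k = Suc (p ! Suc k)"
        using layered_crossing[OF perm assms(2) Suc.prems, of k k] by simp
      moreover have "p ! k \<le> M k" unfolding M_def by (rule Max_ge) auto
      then have "p ! Suc k \<le> M k" using True by simp
      ultimately show ?thesis
        using Suc prefix by (simp add: M_def run_step_def max_absorb2)
    next
      case False
      then have ascent: "p ! k < p ! Suc k"
        using is_perm_nth_eq_iff[OF perm, of k "Suc k"] Suc.prems by auto
      have set: "(!) p ` {..k} = {1..Suc k}"
        using layered_ascent_prefix[OF perm assms(2) Suc.prems ascent] .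
      have "p ! Suc k \<notin> (!) p ` {..k}"
        using is_perm_nth_eq_iff[OF perm] Suc.prems by fastforce
      then have "Suc k < p ! Suc k" using set is_perm_nth_range[OF perm Suc.prems] by auto
      then have "M k = Suc k" "M (Suc k) = p ! Suc k"
        unfolding M_def prefix set by (auto simp: Max_insert max_def Max_atLeastAtMost_nat)
      moreover have "odd (greedy_run p k) \<longleftrightarrow> odd (p ! k)" by (rule odd_greedy_run)
      ultimately show ?thesis
        using Suc ascent by (simp add: run_step_def) presburger
    qed
  qed
  have "M (n - 1) = n"
  proof -
    have "(!) p ` {..n - 1} = set p"
      using is_perm_length[OF perm] assms(3) by (auto simp: set_conv_nth) (metis odd_pos less_Suc_eq_le Suc_pred)
    moreover have "1 \<le> n" using odd_pos[OF assms(3)] by simp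
    ultimately show ?thesis using perm unfolding M_def is_perm_def by (simp add: Max_atLeastAtMost_nat)
  qed
  then show ?thesis using bound[of "n - 1"] odd_pos[OF assms(3)] assms(3) by simp
qed

theorem mainTheorem6:
  fixes n :: nat
  assumes "odd n" and "n \<ge> 1"
  shows "length (zeta n) = (n^2 + 1) div 2 \<and>
         (\<forall>\<pi>. is_perm n \<pi> \<longrightarrow> (\<exists>s. subseq s (zeta n) \<and> order_iso s \<pi>))"
proof (intro conjI allI impI)
  show "length (zeta n) = (n^2 + 1) div 2"
    using length_zeta length_zword_odd[OF assms(1)] by simp
  fix \<pi> assume perm: "is_perm n \<pi>"
  obtain w where "length w = n" "\<forall>k<n. w ! k \<in> {1..n}" "standardizes \<pi> w" "greedy_run w (n - 1) \<le> n"
  proof (cases "layered \<pi>")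
    case True
    then show ?thesis
      using that is_perm_nth_range[OF perm] greedy_run_layered[OF perm True assms(1)] is_perm_length[OF perm]
        distinct_standardizes_self perm unfolding is_perm_def by blast
  next
    case False
    then show ?thesis using that non_layered_fitting_word[OF perm] by blast
  qed
  then show "\<exists>s. subseq s (zeta n) \<and> order_iso s \<pi>"
    using zeta_contains_standardization[of w n \<pi>] by simp
qed

end
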